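(* Let $\mathcal{W}\subset\mathbb{R}^2$ be a planar workspace, $\mathcal{T}:\mathcal{W}\to\mathcal{D}$ the harmonic homeomorphism onto the punctured unit disk, $\mathcal{U}=\{u\in\mathbb{R}^2 : A_s^\top u\ge B_s\}\neq\emptyset$ the input set, and consider the robot $\dot p=u(t)$, $p(0)=\bar p\in\operatorname{int}\mathcal{W}$, with transformed position $q(t)=\mathcal{T}(p(t))$. Let $\mu$ be a predicate with predicate function $h:\mathcal{W}\to\mathbb{R}$ satisfying the assumption below, let $h_T$ be its transformed predicate on $\mathcal{D}$, let $0<t_0<t_1$ and $0<\delta<t_1-t_0$, and consider the always formula $G_{[t_0,t_1]}\mu$ together with the function $$b^G_{[t_0,t_1]}(q,t)=\sigma_{t_1,\delta}(t)\big(h_T(q)+\gamma^G_\delta(z,t)\big),\qquad \gamma^G_\delta(z,t)=a\exp\!\Big(\tfrac{t}{t_0}\ln\!\big(1+\tfrac{h_T(z)}{a}\big)\Big)-\big(a+h_T(z)\big),$$ where $z=\mathcal{T}(\bar p)=\mathcal{T}(p(0))$ and $a\in\mathbb{R}_{\ge 0}$ is chosen such that $0<1+\tfrac{h_T(z)}{a}<1$. If there exists an admissible input $u$ (i.e. $u(t)\in\mathcal{U}$ for all $t\ge 0$) such that the time-varying set $\mathcal{B}^G(t)=\{q\in\mathcal{D}: b^G_{[t_0,t_1]}(q,t)\ge 0\}$ is forward invariant along the resulting trajectory, then the predicate is satisfied, i.e. the trajectory $p$ satisfies $G_{[t_0,t_1]}\mu$ ($h(p(\tau))\ge 0$ for all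 $\tau\in[t_0,t_1]$).
   Context: Workspace: $\mathcal{G}\subset\mathbb{R}^2$ is a connected planar region containing finitely many distinct inner obstacles $\mathcal{O}_i\subset\mathcal{G}$, and $\mathcal{W}=\mathcal{G}\setminus\bigcup_i\mathcal{O}_i$. $\mathcal{T}:\mathcal{W}\to\mathcal{D}$ is a harmonic homeomorphism onto a punctured unit disk $\mathcal{D}\subseteq\{x\in\mathbb{R}^2:\|x\|\le 1\}$: the outer boundary $\partial\mathcal{G}$ is mapped onto the unit circle and each inner obstacle is mapped to a point of $\mathcal{D}$; its Jacobian $\mathcal{J}(p)$ is invertible. $A_s\in\mathbb{R}^{2\times M}$, $B_s\in\mathbb{R}^M$. Predicate: $\mu$ is True at $p$ iff $h(p)\ge 0$. Assumption on $h$: $h$ is twice continuously differentiable and its zero super-level set $\mathcal{H}=\{p\in\mathcal{W}:h(p)\ge 0\}$ is closed and simply connected. Transformed set $\mathcal{H}_T=\{q\in\mathcal{D}: h(\mathcal{T}^{-1}(q))\ge 0\}$, and the transformed predicate $h_T:\mathcal{D}\to\mathbb{R}$ is the signed distance $h_T(q)=-\min_{\tilde q\in\partial\mathcal{H}_T}\|q-\tilde q\|$ if $q\notin\mathcal{H}_T$ and $h_T(q)=+\min_{\tilde q\in\partial\mathcal{H}_T}\|q-\tilde q\|$ if $q\in\mathcal{H}_T$. Switching function: for $\tau\in\mathbb{R}$, $\delta>0$, $\sigma_{\tau,\delta}(t)=1$ for $t\le\tau-\delta$, $\sigma_{\tau,\delta}(t)=\exp\!\big(-\big[\tfrac{t-(\tau-\delta)}{t-\tau}\big]^2\big)$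 for $\tau-\delta<t<\tau$, and $\sigma_{\tau,\delta}(t)=0$ for $t\ge\tau$. STL semantics: $(p,t)\models G_{[a,b]}\mu$ iff $h(p(t_1))\ge 0$ for all $t_1\in[t+a,t+b]$; satisfaction by the trajectory means $(p,0)\models G_{[t_0,t_1]}\mu$. Forward invariance of $\mathcal{B}^G(t)$ means: if $q(0)\in\mathcal{B}^G(0)$ then $q(t)\in\mathcal{B}^G(t)$ for all $t\ge 0$. *)

theory Defs
  imports "HOL-Analysis.Analysis"
begin

type_synonym pt = "real^2"

definition C2_on :: "pt set \<Rightarrow> (pt \<Rightarrow> 'b::real_normed_vector) \<Rightarrow> bool" where
  "C2_on S f \<longleftrightarrow>
     (\<exists>f1 :: pt \<Rightarrow> (pt \<Rightarrow>\<^sub>L 'b). \<exists>f2 :: pt \<Rightarrow> (pt \<Rightarrow>\<^sub>L (pt \<Rightarrow>\<^sub>L 'b)).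
        (\<forall>x\<in>S. (f has_derivative blinfun_apply (f1 x)) (at x within S)) \<and>
        (\<forall>x\<in>S. (f1 has_derivative blinfun_apply (f2 x)) (at x within S)) \<and>
        continuous_on S f2)"

definition harmonic_on :: "pt set \<Rightarrow> (pt \<Rightarrow> 'b::real_normed_vector) \<Rightarrow> bool" where
  "harmonic_on S f \<longleftrightarrow>
     (\<exists>f1 :: pt \<Rightarrow> (pt \<Rightarrow>\<^sub>L 'b). \<exists>f2 :: pt \<Rightarrow> (pt \<Rightarrow>\<^sub>L (pt \<Rightarrow>\<^sub>L 'b)).
        (\<forall>x\<in>S. (f has_derivative blinfun_apply (f1 x)) (at x within S)) \<and>
        (\<forall>x\<in>S. (f1 has_derivative blinfun_apply (f2 x)) (at x within S)) \<and>
        continuous_on S f2 \<and>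
        (\<forall>x\<in>interior S. (\<Sum>i\<in>Basis. blinfun_apply (blinfun_apply (f2 x) i) i) = 0))"

text \<open>The workspace setting: G connected planar region, finitely many distinct inner
  obstacles Obs i (i in the finite index set I), W = G minus the obstacles, and
  T : W \<rightarrow> D a harmonic homeomorphism onto the punctured unit disk D (closed unit disk
  with one puncture c i per obstacle), mapping the outer boundary of G onto the unit
  circle, with invertible Jacobian everywhere on W.\<close>
definition harmonic_workspace ::
  "pt set \<Rightarrow> 'i set \<Rightarrow> ('i \<Rightarrow> pt set) \<Rightarrow> pt set \<Rightarrow> pt set \<Rightarrow> (pt \<Rightarrow> pt) \<Rightarrow> bool" where
  "harmonic_workspace G I Obs W D T \<longleftrightarrow>
     connected G \<and> finite I \<and> inj_on Obs I \<and> (\<forall>i\<in>I. Obs i \<noteq> {} \<and> Obs i \<subseteq> G) \<and>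
     W = G - (\<Union>i\<in>I. Obs i) \<and>
     (\<exists>c. inj_on c I \<and> c ` I \<subseteq> ball 0 1 \<and> D = cball 0 1 - c ` I) \<and>
     (\<exists>Tinv. homeomorphism W D T Tinv) \<and>
     frontier G \<subseteq> W \<and> T ` frontier G = sphere 0 1 \<and>
     harmonic_on W T \<and>
     (\<forall>x\<in>W. \<exists>J. (T has_derivative J) (at x within W) \<and> linear J \<and> bij J)"

definition sigma_sw :: "real \<Rightarrow> real \<Rightarrow> real \<Rightarrow> real" where
  "sigma_sw \<tau> \<delta> t =
     (if t \<le> \<tau> - \<delta> then 1
      else if t < \<tau> then exp (- (((t - (\<tau> - \<delta>)) / (t - \<tau>))\<^sup>2))
      else 0)"

definition transformed_set :: "pt set \<Rightarrow> pt set \<Rightarrow> (pt \<Rightarrow> pt) \<Rightarrow> (pt \<Rightarrow> real) \<Rightarrow> pt set" where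
  "transformed_set W D T h = {q \<in> D. h (inv_into W T q) \<ge> 0}"

text \<open>Transformed predicate h_T: signed distance to the boundary of H_T
  (the minimum over the boundary is rendered by infdist).\<close>
definition transformed_pred :: "pt set \<Rightarrow> pt set \<Rightarrow> (pt \<Rightarrow> pt) \<Rightarrow> (pt \<Rightarrow> real) \<Rightarrow> pt \<Rightarrow> real" where
  "transformed_pred W D T h q =
     (let HT = transformed_set W D T h in
      if q \<in> HT then infdist q (frontier HT) else - infdist q (frontier HT))"

definition gammaG :: "real \<Rightarrow> real \<Rightarrow> real \<Rightarrow> real \<Rightarrow> real" where
  "gammaG a t0 hTz t = a * exp ((t / t0) * ln (1 + hTz / a)) - (a + hTz)"

definition bG :: "(pt \<Rightarrow> real) \<Rightarrow> real \<Rightarrow> real \<Rightarrow> real \<Rightarrow> real \<Rightarrow> pt \<Rightarrow> pt \<Rightarrow> real \<Rightarrow> real" where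
  "bG hT a t0 t1 \<delta> z q t = sigma_sw t1 \<delta> t * (hT q + gammaG a t0 (hT z) t)"

definition forward_invariant :: "(real \<Rightarrow> pt set) \<Rightarrow> (real \<Rightarrow> pt) \<Rightarrow> bool" where
  "forward_invariant B q \<longleftrightarrow> (q 0 \<in> B 0 \<longrightarrow> (\<forall>t\<ge>0. q t \<in> B t))"

definition input_set :: "real^'m^2 \<Rightarrow> real^'m \<Rightarrow> pt set" where
  "input_set As Bs = {u. \<forall>j. (transpose As *v u) $ j \<ge> Bs $ j}"

end

theory Submission
  imports Defs
begin

text \<open>The barrier vanishes at the initial transformed position, so forward invariance keeps
  it nonnegative along the whole trajectory. For \<open>t0 < t < t1\<close> the switching factor is
  positive and, because \<open>0 < 1 + h_T(z)/a < 1\<close> and \<open>t/t0 > 1\<close>, the offset \<open>\<gamma>\<close> is negative;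
  hence \<open>h_T(q(t)) > 0\<close>, which places \<open>q(t)\<close> in \<open>H_T\<close> and gives \<open>h(p(t)) \<ge> 0\<close>. Continuity
  of \<open>h \<circ> p\<close> extends this to the closed interval.\<close>

lemma sigma_sw_pos: "t < \<tau> \<Longrightarrow> 0 < sigma_sw \<tau> \<delta> t"
  unfolding sigma_sw_def by auto

lemma gammaG_at_0: "gammaG a t0 c 0 = - c"
  unfolding gammaG_def by simp

lemma bG_initial_point: "bG hT a t0 t1 \<delta> z z 0 = 0"
  unfolding bG_def gammaG_at_0 by simp

lemma gammaG_neg:
  assumes "0 < a" "0 < 1 + c / a" "1 + c / a < 1" "0 < t0" "t0 < t"
  shows "gammaG a t0 c t < 0"
proof -
  define r where "r = 1 + c / a"
  have "ln r < 0" using assms(2,3) unfolding r_def by simp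
  moreover have "1 < t / t0" using assms(4,5) by simp
  ultimately have "(t / t0) * ln r < 1 * ln r"
    by (intro mult_strict_right_mono_neg) auto
  then have "exp ((t / t0) * ln r) < r"
    using assms(2) unfolding r_def by (metis exp_less_cancel_iff exp_ln mult_1)
  then have "a * exp ((t / t0) * ln r) < a * r"
    using assms(1) by simp
  also have "a * r = a + c"
    using assms(1) unfolding r_def by (simp add: field_simps)
  finally show ?thesis unfolding gammaG_def r_def by simp
qed

lemma bG_nonneg_imp_pos:
  assumes "0 \<le> bG hT a t0 t1 \<delta> z q t"
    and "0 < a" "0 < 1 + hT z / a" "1 + hT z / a < 1" "0 < t0" "t0 < t" "t < t1"
  shows "0 < hT q"
proof -
  have "0 < sigma_sw t1 \<delta> t" using assms(7) by (rule sigma_sw_pos)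
  then have "0 \<le> hT q + gammaG a t0 (hT z) t"
    using assms(1) unfolding bG_def by (simp add: zero_le_mult_iff)
  moreover have "gammaG a t0 (hT z) t < 0"
    using assms(2-6) by (rule gammaG_neg)
  ultimately show ?thesis by linarith
qed

lemma transformed_pred_pos_imp_mem:
  "0 < transformed_pred W D T h q \<Longrightarrow> q \<in> transformed_set W D T h"
  using infdist_nonneg[of q "frontier (transformed_set W D T h)"]
  unfolding transformed_pred_def Let_def by (auto split: if_splits)

lemma transformed_set_image_iff:
  assumes "inj_on T W" "x \<in> W"
  shows "T x \<in> transformed_set W D T h \<longleftrightarrow> T x \<in> D \<and> 0 \<le> h x"
  using assms by (simp add: transformed_set_def inv_into_f_f)

lemma C2_on_imp_continuous_on: "C2_on S f \<Longrightarrow> continuous_on S f"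
  unfolding C2_on_def by (elim exE conjE) (rule has_derivative_continuous_on, blast)

lemma nonneg_on_closed_interval_if_nonneg_on_open:
  fixes f :: "real \<Rightarrow> real"
  assumes "continuous_on {a..b} f" "a < b" "\<And>t. a < t \<Longrightarrow> t < b \<Longrightarrow> 0 \<le> f t"
  shows "\<forall>t\<in>{a..b}. 0 \<le> f t"
  using continuous_ge_on_closure[of "{a<..<b}" f _ 0] assms by auto

theorem theorem2:
  fixes G W D :: "(real^2) set" and I :: "'i set" and Obs :: "'i \<Rightarrow> (real^2) set"
    and T :: "real^2 \<Rightarrow> real^2" and As :: "real^'m^2" and Bs :: "real^'m"
    and h :: "real^2 \<Rightarrow> real" and t0 t1 \<delta> a :: real and pbar :: "real^2"
    and u p :: "real \<Rightarrow> real^2"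
  assumes ws: "harmonic_workspace G I Obs W D T"
    and U_ne: "input_set As Bs \<noteq> {}"
    and h_C2: "C2_on W h"
    and H_closed: "closed {x \<in> W. h x \<ge> 0}"
    and H_sc: "simply_connected {x \<in> W. h x \<ge> 0}"
    and times: "0 < t0" "t0 < t1" "0 < \<delta>" "\<delta> < t1 - t0"
    and a_nonneg: "a \<ge> 0"
    and a_cond: "0 < 1 + transformed_pred W D T h (T pbar) / a"
                "1 + transformed_pred W D T h (T pbar) / a < 1"
    and pbar: "pbar \<in> interior W"
    and admissible: "\<forall>t\<ge>0. u t \<in> input_set As Bs"
    and ode: "\<forall>t\<ge>0. (p has_vector_derivative u t) (at t within {0..})"
    and init: "p 0 = pbar"
    and in_W: "\<forall>t\<ge>0. p t \<in> W"
    and inv: "forward_invariant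
                (\<lambda>t. {q \<in> D. bG (transformed_pred W D T h) a t0 t1 \<delta> (T pbar) q t \<ge> 0})
                (\<lambda>t. T (p t))"
  shows "\<forall>\<tau>\<in>{t0..t1}. h (p \<tau>) \<ge> 0"
proof (rule nonneg_on_closed_interval_if_nonneg_on_open)
  let ?hT = "transformed_pred W D T h"
  obtain Tinv where "homeomorphism W D T Tinv"
    using ws unfolding harmonic_workspace_def by blast
  then have TW: "T ` W = D" and injT: "inj_on T W"
    by (auto simp: homeomorphism_def intro: inj_on_inverseI)
  have a_pos: "0 < a"
    using a_nonneg a_cond by (cases "a = 0") auto
  have "T pbar \<in> D"
    using pbar interior_subset TW by blast
  then have barrier: "0 \<le> bG ?hT a t0 t1 \<delta> (T pbar) (T (p t)) t" if "0 \<le> t" for t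
    using inv that init unfolding forward_invariant_def by (simp add: bG_initial_point)
  show "0 \<le> h (p t)" if "t0 < t" "t < t1" for t
  proof -
    have "0 \<le> t" using that times by simp
    have "0 < ?hT (T (p t))"
      using bG_nonneg_imp_pos[OF barrier[OF \<open>0 \<le> t\<close>] a_pos a_cond times(1)] that .
    then show ?thesis
      using transformed_pred_pos_imp_mem transformed_set_image_iff injT in_W \<open>0 \<le> t\<close> by blast
  qed
  have "continuous_on {0..} p"
    using ode by (auto simp: continuous_on_eq_continuous_within intro: has_vector_derivative_continuous)
  then have "continuous_on {t0..t1} p"
    by (rule continuous_on_subset) (use times in auto)
  moreover have "p ` {t0..t1} \<subseteq> W"
    using in_W times by auto
  ultimately show "continuous_on {t0..t1} (\<lambda>t. h (p t))"
    using continuous_on_compose2[OF C2_on_imp_continuous_on[OF h_C2]] by blast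
  show "t0 < t1" by (rule times(2))
qed

end
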